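(* For all positive integers $n\geq 2$ and $t$, the set $D_{n,t}$ is a dominating set of $S(K_n,t)$.
   Context: For a positive integer $n$ let $[n]=\{1,\dots,n\}$. For positive integers $n,t$, the Sierpiński graph $S(K_n,t)$ is the simple graph with vertex set $[n]^t$ (words $v_1v_2\cdots v_t$ with $v_i\in[n]$), in which $u_1\cdots u_t$ and $v_1\cdots v_t$ are adjacent if and only if there is $s\in[t]$ with $u_j=v_j$ for all $j<s$, $u_s\neq v_s$, and $u_j=v_s$ and $v_j=u_s$ for all $j>s$. A set of vertices is dominating if every vertex lies in it or is adjacent to one of its elements. Write $a^k$ for the word consisting of $k$ copies of the letter $a$. The sets $D_{n,t}\subseteq[n]^t$ are defined recursively: $D_{n,1}=\{1\}$, $D_{n,2}=\{11,21,\dots,n1\}$. For $t\geq 3$ and $\mathbf v=v_1\cdots v_{t-2}\in D_{n,t-2}$ put $E_1(\mathbf v)=\{v_1\cdots v_{t-2}\alpha\alpha:\alpha\in[n]\}$, $E_2(\mathbf v)=\{v_1\cdots v_{t-3}\alpha\beta v_{t-2}:\alpha,\beta\in[n]\setminus\{v_{t-2}\}\}$, and, if $\mathbf v$ is not a constant word, let $\ell$ be the largest index in $[t-3]$ with $v_\ell\neq v_{\ell+1}$ and put $E_3(\mathbf v)=\{v_1\cdots v_{\ell-1}v_{\ell+1}v_\ell^{\,t-\ell-2}\alpha v_\ell:\alpha\in[n]\setminus\{v_\ell\}\}$. If $t\geq 3$ is odd, $D_{n,t}=E_1(1^{t-2})\cup E_2(1^{t-2})\cup\bigcup_{\mathbf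 v\in D_{n,t-2}\setminus\{1^{t-2}\}}\big(E_1(\mathbf v)\cup E_2(\mathbf v)\cup E_3(\mathbf v)\big)$. If $t\geq 4$ is even, $D_{n,t}=\{1^{t-2}\alpha1:\alpha\in[n]\}\cup\bigcup_{\mathbf v\in D_{n,t-2}\setminus\{1^{t-2}\}}\big(E_1(\mathbf v)\cup E_2(\mathbf v)\cup E_3(\mathbf v)\big)$. (In this recursion $1^{t-2}\in D_{n,t-2}$ is the only constant word in $D_{n,t-2}$, so $E_3$ is applied only to non-constant words.) *)

theory Defs
  imports Main
begin

(* Words over [n] are lists; positions are 0-indexed in the formalization
   (paper position i corresponds to list index i-1). *)

definition sierp_vertices :: "nat \<Rightarrow> nat \<Rightarrow> nat list set" where
  "sierp_vertices n t = {w. length w = t \<and> set w \<subseteq> {1..n}}"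

definition sierp_adj :: "nat list \<Rightarrow> nat list \<Rightarrow> bool" where
  "sierp_adj u v \<longleftrightarrow> length u = length v \<and>
     (\<exists>s < length u. (\<forall>j < s. u ! j = v ! j) \<and> u ! s \<noteq> v ! s \<and>
        (\<forall>j. s < j \<and> j < length u \<longrightarrow> u ! j = v ! s \<and> v ! j = u ! s))"

definition sierp_dominating :: "nat \<Rightarrow> nat \<Rightarrow> nat list set \<Rightarrow> bool" where
  "sierp_dominating n t D \<longleftrightarrow> D \<subseteq> sierp_vertices n t \<and>
     (\<forall>v \<in> sierp_vertices n t. v \<in> D \<or> (\<exists>u \<in> D. sierp_adj u v))"

definition E1 :: "nat \<Rightarrow> nat list \<Rightarrow> nat list set" where
  "E1 n v = {v @ [a, a] | a. a \<in> {1..n}}"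

definition E2 :: "nat \<Rightarrow> nat list \<Rightarrow> nat list set" where
  "E2 n v = {butlast v @ [a, b, last v] | a b.
               a \<in> {1..n} - {last v} \<and> b \<in> {1..n} - {last v}}"

definition lidx :: "nat list \<Rightarrow> nat" where
  "lidx v = (GREATEST i. i + 1 < length v \<and> v ! i \<noteq> v ! (i + 1))"

(* v_1..v_{l-1} v_{l+1} v_l^{t-l-2} a v_l  with t = length v + 2 *)
definition E3 :: "nat \<Rightarrow> nat list \<Rightarrow> nat list set" where
  "E3 n v = (let l = lidx v in
     {take l v @ [v ! (l + 1)] @ replicate (length v - l - 1) (v ! l) @ [a, v ! l] | a.
        a \<in> {1..n} - {v ! l}})"

fun Dset :: "nat \<Rightarrow> nat \<Rightarrow> nat list set" where
  "Dset n 0 = {}"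
| "Dset n (Suc 0) = {[1]}"
| "Dset n (Suc (Suc 0)) = {[a, 1] | a. a \<in> {1..n}}"
| "Dset n (Suc (Suc (Suc k))) =
     (let t = k + 3; one = replicate (Suc k) (1::nat);
          rest = (\<Union>v \<in> Dset n (Suc k) - {one}. E1 n v \<union> E2 n v \<union> E3 n v)
      in if odd t then E1 n one \<union> E2 n one \<union> rest
         else {replicate (Suc k) 1 @ [a, 1] | a. a \<in> {1..n}} \<union> rest)"

end

theory Submission
  imports Defs
begin

text \<open>Induction on t in steps of two. The edges of S(K_n,t) are exactly the swaps
r d c^m -- r c d^m with c \<noteq> d (for m = 0, a change of the last letter). A word of length t + 2
is p a b with p dominated by D_{n,t}. If p \<in> D_{n,t}, the word p a a \<in> E_1(p) (or 1^t a 1 in the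
exceptional even case) differs from p a b in the last letter only. If p = r c d^m is adjacent to
u = r d c^m \<in> D_{n,t}, then u c c \<in> E_1(u) and the words r c d^m \<alpha> d, which lie in E_2(u) for
m = 0 and in E_3(u) for m \<ge> 1, dominate every p a b. The one neighbour not covered is u = 1^t
for even t; then p = 1^(t-1) c is also adjacent to 1^(t-2) c 1 \<in> D_{n,t}.\<close>

lemma sierp_adj_swap:
  assumes "c \<noteq> d"
  shows "sierp_adj (r @ [c] @ replicate m d) (r @ [d] @ replicate m c)"
  unfolding sierp_adj_def using assms
  by (intro conjI exI[of _ "length r"]) (auto simp: nth_append nth_Cons split: nat.split)

lemma sierp_adj_imp_swap:
  assumes "sierp_adj u v"
  shows "\<exists>r c d m. c \<noteq> d \<and> u = r @ [c] @ replicate m d \<and> v = r @ [d] @ replicate m c"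
proof -
  from assms obtain s where len: "length u = length v" and s: "s < length u"
    and prefix: "\<forall>j<s. u ! j = v ! j" and ne: "u ! s \<noteq> v ! s"
    and suffix: "\<forall>j. s < j \<and> j < length u \<longrightarrow> u ! j = v ! s \<and> v ! j = u ! s"
    unfolding sierp_adj_def by blast
  let ?m = "length u - Suc s"
  have "u = take s u @ [u ! s] @ replicate ?m (v ! s)"
    by (rule nth_equalityI) (use s suffix in \<open>auto simp: nth_append nth_Cons' min_def\<close>)
  moreover have "v = take s u @ [v ! s] @ replicate ?m (u ! s)"
    by (rule nth_equalityI) (use s len prefix suffix in \<open>auto simp: nth_append nth_Cons' min_def\<close>)
  ultimately show ?thesis using ne by blast
qed

definition nonconstant :: "'a list \<Rightarrow> bool" where
  "nonconstant w \<longleftrightarrow> (\<exists>i. Suc i < length w \<and> w ! i \<noteq> w ! Suc i)"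

lemma nonconstant_append_left:
  assumes "nonconstant u"
  shows "nonconstant (u @ w)"
proof -
  from assms obtain i where "Suc i < length u" "u ! i \<noteq> u ! Suc i"
    unfolding nonconstant_def by blast
  then show ?thesis unfolding nonconstant_def by (intro exI[of _ i]) (simp add: nth_append)
qed

lemma nonconstant_append_pair: "x \<noteq> y \<Longrightarrow> nonconstant (u @ [x, y] @ w)"
  unfolding nonconstant_def by (intro exI[of _ "length u"]) (simp add: nth_append)

lemma Suc_lidx_less_length:
  assumes "nonconstant v"
  shows "Suc (lidx v) < length v"
proof -
  from assms obtain i where "i + 1 < length v \<and> v ! i \<noteq> v ! (i + 1)"
    unfolding nonconstant_def by auto
  then have "lidx v + 1 < length v \<and> v ! lidx v \<noteq> v ! (lidx v + 1)"
    unfolding lidx_def by (rule GreatestI_nat[where b = "length v"]) auto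
  then show ?thesis by simp
qed

lemma lidx_swap:
  assumes "c \<noteq> d" "m \<ge> 1"
  shows "lidx (r @ [d] @ replicate m c) = length r"
  unfolding lidx_def
proof (rule Greatest_equality)
  show "length r + 1 < length (r @ [d] @ replicate m c) \<and>
      (r @ [d] @ replicate m c) ! length r \<noteq> (r @ [d] @ replicate m c) ! (length r + 1)"
    using assms by (auto simp: nth_append)
  fix i assume i: "i + 1 < length (r @ [d] @ replicate m c) \<and>
      (r @ [d] @ replicate m c) ! i \<noteq> (r @ [d] @ replicate m c) ! (i + 1)"
  show "i \<le> length r"
  proof (rule ccontr)
    assume "\<not> i \<le> length r"
    then obtain z where "i = Suc (length r + z)" using less_imp_Suc_add by fastforce
    then show False using i by (auto simp: nth_append)
  qed
qed

lemma E1_mem: "c \<in> {1..n} \<Longrightarrow> v @ [c, c] \<in> E1 n v"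
  unfolding E1_def by blast

lemma E2_mem:
  "\<lbrakk>c \<noteq> e; a \<noteq> e; c \<in> {1..n}; a \<in> {1..n}\<rbrakk> \<Longrightarrow> q @ [c, a, e] \<in> E2 n (q @ [e])"
  unfolding E2_def by force

lemma E3_mem:
  assumes "c \<noteq> d" "m \<ge> 1" "a \<noteq> d" "a \<in> {1..n}"
  shows "r @ [c] @ replicate m d @ [a, d] \<in> E3 n (r @ [d] @ replicate m c)"
proof -
  have "(r @ [d] @ replicate m c) ! (length r + 1) = c"
    using assms(2) by (cases m) (auto simp: nth_append)
  then show ?thesis
    unfolding E3_def Let_def lidx_swap[OF assms(1,2)] using assms by auto
qed

definition dominated :: "nat list set \<Rightarrow> nat list \<Rightarrow> bool" where
  "dominated D x \<longleftrightarrow> x \<in> D \<or> (\<exists>u\<in>D. sierp_adj u x)"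

lemma dominated_swap:
  assumes "r @ [d] @ replicate m c \<in> D"
  shows "dominated D (r @ [c] @ replicate m d)"
proof (cases "c = d")
  case True
  then show ?thesis using assms unfolding dominated_def by simp
next
  case False
  then show ?thesis using assms sierp_adj_swap[of d c r m] False unfolding dominated_def by blast
qed

lemma dominated_snoc: "q @ [d] \<in> D \<Longrightarrow> dominated D (q @ [c])"
  using dominated_swap[of q d 0] by simp

lemma replicate_add_two: "replicate (m + 2) c = replicate m c @ [c, c]"
  by (induct m) auto

lemma swap_eq_replicate:
  assumes "r @ [d] @ replicate m c = replicate t x" and "c \<noteq> d"
  shows "m = 0 \<and> d = x \<and> r = replicate (t - 1) x"
proof -
  have letters: "y = x" if "y \<in> set (r @ [d] @ replicate m c)" for y
    using that assms(1) by (metis in_set_replicate)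
  then have "d = x" by simp
  moreover have m: "m = 0" using letters[of c] \<open>d = x\<close> assms(2) by (cases m) auto
  moreover have "r = replicate (t - 1) x"
  proof (rule replicate_eqI)
    show "length r = t - 1" using arg_cong[OF assms(1), of length] m by simp
    show "y = x" if "y \<in> set r" for y using letters that by simp
  qed
  ultimately show ?thesis by blast
qed

lemma dominated_append_pair:
  assumes "c \<noteq> d" and "a \<in> {1..n}" and "b \<in> {1..n}"
    and twice_c: "r @ [d] @ replicate m c @ [c, c] \<in> D"
    and ends_d: "\<And>\<alpha>. \<alpha> \<in> {1..n} \<Longrightarrow> \<alpha> \<noteq> d \<Longrightarrow> r @ [c] @ replicate m d @ [\<alpha>, d] \<in> D"
  shows "dominated D (r @ [c] @ replicate m d @ [a, b])"
proof -
  consider "a \<noteq> d" | "a = d" "b = d" | "a = d" "b \<noteq> d" by blast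
  then show ?thesis
  proof cases
    case 1
    then have "(r @ [c] @ replicate m d @ [a]) @ [d] \<in> D" using ends_d \<open>a \<in> {1..n}\<close> by simp
    from dominated_snoc[OF this, of b] show ?thesis by simp
  next
    case 2
    have "r @ [d] @ replicate (m + 2) c \<in> D" using twice_c unfolding replicate_add_two by simp
    from dominated_swap[OF this] show ?thesis using 2 unfolding replicate_add_two by simp
  next
    case 3
    then have "(r @ [c] @ replicate m d) @ [b] @ replicate 1 d \<in> D" using ends_d \<open>b \<in> {1..n}\<close> by simp
    from dominated_swap[OF this] show ?thesis using 3 by simp
  qed
qed

lemma Dset_1: "Dset n 1 = {[1]}"
  by simp

lemma Dset_2: "Dset n 2 = {[a, 1] | a. a \<in> {1..n}}"
  by (simp add: numeral_2_eq_2)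

lemma Dset_add_two:
  "Dset n (t + 2) =
    (if odd t then E1 n (replicate t 1) \<union> E2 n (replicate t 1)
     else {replicate t 1 @ [a, 1] | a. a \<in> {1..n}}) \<union>
    (\<Union>v \<in> Dset n t - {replicate t 1}. E1 n v \<union> E2 n v \<union> E3 n v)"
  by (cases t) (simp_all add: Let_def)

lemma Dset_mem_imp_ge_1: "v \<in> Dset n t \<Longrightarrow> t \<ge> 1"
  by (cases t) simp_all

lemma E_subset_Dset_add_two:
  assumes "v \<in> Dset n t" "v \<noteq> replicate t 1"
  shows "E1 n v \<union> E2 n v \<union> E3 n v \<subseteq> Dset n (t + 2)"
  unfolding Dset_add_two using assms by blast

lemma E1_E2_subset_Dset_add_two:
  assumes "v \<in> Dset n t" "v \<noteq> replicate t 1 \<or> odd t"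
  shows "E1 n v \<union> E2 n v \<subseteq> Dset n (t + 2)"
proof (cases "v = replicate t 1")
  case True
  with assms(2) have "odd t" by blast
  with True show ?thesis unfolding Dset_add_two by simp
next
  case False
  then show ?thesis using E_subset_Dset_add_two[OF assms(1)] by blast
qed

lemma Dset_even_mem:
  assumes "even t" "t \<ge> 2" "a \<in> {1..n}"
  shows "replicate (t - 2) 1 @ [a, 1] \<in> Dset n t"
proof -
  have "t = (t - 2) + 2" "even (t - 2)" using assms(1,2) by auto
  then show ?thesis using assms(3) Dset_add_two[of n "t - 2"] by auto
qed

lemma Dset_add_two_cases:
  assumes "w \<in> Dset n (t + 2)"
  obtains (const_E1) "odd t" "w \<in> E1 n (replicate t 1)"
    | (const_E2) "odd t" "w \<in> E2 n (replicate t 1)"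
    | (const_pair) a where "even t" "a \<in> {1..n}" "w = replicate t 1 @ [a, 1]"
    | (E) v where "v \<in> Dset n t" "v \<noteq> replicate t 1" "w \<in> E1 n v \<union> E2 n v \<union> E3 n v"
  using assms that unfolding Dset_add_two by (cases "odd t") auto

lemma nat_induct_add_two_from_one [consumes 1, case_names one two add_two]:
  fixes t :: nat
  assumes "1 \<le> t" and "P 1" and "P 2" and "\<And>t. 1 \<le> t \<Longrightarrow> P t \<Longrightarrow> P (t + 2)"
  shows "P t"
proof -
  have "P (m + 1)" for m
  proof (induction m rule: nat_induct2)
    case (step m)
    then show ?case using assms(4)[of "m + 1"] by (simp add: ac_simps)
  qed (use assms(2,3) in \<open>simp_all add: numeral_2_eq_2\<close>)
  from this[of "t - 1"] show ?thesis using assms(1) by simp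
qed

lemma E1_const_or_nonconstant:
  assumes "v = replicate t 1 \<or> nonconstant v" and "t \<ge> 1" and "w \<in> E1 n v"
  shows "w = replicate (t + 2) 1 \<or> nonconstant w"
proof -
  from assms(3) obtain a where w: "w = v @ [a, a]" unfolding E1_def by blast
  consider "nonconstant v" | "v = replicate t 1" "a = 1" | "v = replicate t 1" "a \<noteq> 1"
    using assms(1) by fast
  then show ?thesis
  proof cases
    case 1
    then show ?thesis using w nonconstant_append_left by blast
  next
    case 2
    then show ?thesis using w unfolding replicate_add_two by simp
  next
    case 3
    obtain t' where "t = Suc t'" using assms(2) by (cases t) auto
    then have "w = replicate t' 1 @ [1, a] @ [a]"
      using w 3(1) by (simp add: replicate_append_same)
    moreover have "nonconstant (replicate t' 1 @ [1, a] @ [a])"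
      by (rule nonconstant_append_pair) (use 3(2) in simp)
    ultimately show ?thesis by simp
  qed
qed

lemma E2_nonconstant: "w \<in> E2 n v \<Longrightarrow> nonconstant w"
proof -
  assume "w \<in> E2 n v"
  then obtain a b where "w = (butlast v @ [a]) @ [b, last v] @ []" "b \<noteq> last v"
    unfolding E2_def by auto
  then show ?thesis using nonconstant_append_pair by metis
qed

lemma E3_nonconstant: "w \<in> E3 n v \<Longrightarrow> nonconstant w"
proof -
  assume "w \<in> E3 n v"
  then obtain x a where "w = x @ [a, v ! lidx v] @ []" "a \<noteq> v ! lidx v"
    unfolding E3_def Let_def by auto
  then show ?thesis using nonconstant_append_pair by metis
qed

lemma Dset_const_or_nonconstant:
  assumes "w \<in> Dset n t"
  shows "w = replicate t 1 \<or> nonconstant w"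
proof -
  have "1 \<le> t" using Dset_mem_imp_ge_1[OF assms] .
  then show ?thesis using assms
  proof (induction t arbitrary: w rule: nat_induct_add_two_from_one)
    case one
    then show ?case by (simp add: Dset_1)
  next
    case two
    then obtain a where "w = [] @ [a, 1] @ []" by (auto simp: Dset_2)
    then show ?case using nonconstant_append_pair[of a 1 "[]" "[]"]
      by (cases "a = 1") (simp_all add: numeral_2_eq_2)
  next
    case (add_two t)
    from add_two.prems show ?case
    proof (cases rule: Dset_add_two_cases)
      case const_E1
      then show ?thesis using E1_const_or_nonconstant[OF disjI1[OF refl] add_two.hyps(1)] by blast
    next
      case const_E2
      then show ?thesis using E2_nonconstant by simp
    next
      case (const_pair a)
      then show ?thesis using nonconstant_append_pair[of a 1 "replicate t 1" "[]"]
        unfolding replicate_add_two by (cases "a = 1") simp_all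
    next
      case (E v)
      then have "nonconstant v" using add_two.IH by blast
      with E(3) show ?thesis
        using E1_const_or_nonconstant[OF disjI2 add_two.hyps(1)] E2_nonconstant E3_nonconstant
        by (elim UnE) blast+
    qed
  qed
qed

lemma sierp_vertices_letter: "v \<in> sierp_vertices n t \<Longrightarrow> x \<in> set v \<Longrightarrow> x \<in> {1..n}"
  unfolding sierp_vertices_def by blast

lemma E1_subset_vertices: "v \<in> sierp_vertices n t \<Longrightarrow> E1 n v \<subseteq> sierp_vertices n (t + 2)"
  unfolding E1_def sierp_vertices_def by auto

lemma E2_subset_vertices:
  assumes "v \<in> sierp_vertices n t" "t \<ge> 1"
  shows "E2 n v \<subseteq> sierp_vertices n (t + 2)"
proof -
  have "v \<noteq> []" using assms unfolding sierp_vertices_def by auto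
  have "last v \<in> {1..n}" by (intro sierp_vertices_letter[OF assms(1)]) (use \<open>v \<noteq> []\<close> in simp)
  moreover have "set (butlast v) \<subseteq> {1..n}"
    using sierp_vertices_letter[OF assms(1)] by (blast dest: in_set_butlastD)
  ultimately show ?thesis using assms unfolding E2_def sierp_vertices_def by auto
qed

(* Without nonconstancy lidx v is an unspecified GREATEST value and E3 n v may leave the alphabet. *)
lemma E3_subset_vertices:
  assumes "v \<in> sierp_vertices n t" "nonconstant v"
  shows "E3 n v \<subseteq> sierp_vertices n (t + 2)"
proof -
  have l: "Suc (lidx v) < length v" using Suc_lidx_less_length[OF assms(2)] .
  then have "v ! lidx v \<in> {1..n}" "v ! (lidx v + 1) \<in> {1..n}"
    by (intro sierp_vertices_letter[OF assms(1)] nth_mem, simp)+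
  moreover have "set (take (lidx v) v) \<subseteq> {1..n}"
    using sierp_vertices_letter[OF assms(1)] set_take_subset[of "lidx v" v] by blast
  ultimately show ?thesis using assms(1) l unfolding E3_def Let_def sierp_vertices_def by auto
qed

lemma Dset_subset_vertices:
  assumes "1 \<le> n"
  shows "Dset n t \<subseteq> sierp_vertices n t"
proof
  fix w assume w: "w \<in> Dset n t"
  have "1 \<le> t" using Dset_mem_imp_ge_1[OF w] .
  then show "w \<in> sierp_vertices n t" using w
  proof (induction t arbitrary: w rule: nat_induct_add_two_from_one)
    case one
    then show ?case using assms by (simp add: Dset_1 sierp_vertices_def)
  next
    case two
    then show ?case using assms by (auto simp: Dset_2 sierp_vertices_def)
  next
    case (add_two t)
    have const: "replicate t 1 \<in> sierp_vertices n t"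
      using assms by (auto simp: sierp_vertices_def)
    from add_two.prems show ?case
    proof (cases rule: Dset_add_two_cases)
      case const_E1
      then show ?thesis using E1_subset_vertices[OF const] by blast
    next
      case const_E2
      then show ?thesis using E2_subset_vertices[OF const add_two.hyps(1)] by blast
    next
      case (const_pair a)
      then show ?thesis using assms by (auto simp: sierp_vertices_def)
    next
      case (E v)
      have "v \<in> sierp_vertices n t" using add_two.IH E(1) by blast
      moreover have "nonconstant v" using Dset_const_or_nonconstant[OF E(1)] E(2) by blast
      ultimately show ?thesis using E(3) add_two.hyps(1)
        E1_subset_vertices E2_subset_vertices E3_subset_vertices by blast
    qed
  qed
qed

lemma dominated_append_two_of_mem:
  assumes "p \<in> Dset n t" and "a \<in> {1..n}"
  shows "dominated (Dset n (t + 2)) (p @ [a, b])"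
proof (cases "p \<noteq> replicate t 1 \<or> odd t")
  case True
  then have "(p @ [a]) @ [a] \<in> Dset n (t + 2)"
    using E1_E2_subset_Dset_add_two[OF assms(1)] E1_mem[OF assms(2)] by auto
  from dominated_snoc[OF this, of b] show ?thesis by simp
next
  case False
  then have "(p @ [a]) @ [1] \<in> Dset n (t + 2)"
    using Dset_even_mem[of "t + 2" a n] assms(2) by simp
  from dominated_snoc[OF this, of b] show ?thesis by simp
qed

lemma dominated_append_two_of_neighbour:
  assumes u: "r @ [d] @ replicate m c \<in> Dset n t"
    and u_ne: "r @ [d] @ replicate m c \<noteq> replicate t 1 \<or> odd t"
    and cd: "c \<noteq> d" and c: "c \<in> {1..n}" and ab: "a \<in> {1..n}" "b \<in> {1..n}"
  shows "dominated (Dset n (t + 2)) (r @ [c] @ replicate m d @ [a, b])"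
proof (cases m)
  case 0
  have sub: "E1 n (r @ [d]) \<union> E2 n (r @ [d]) \<subseteq> Dset n (t + 2)"
    using E1_E2_subset_Dset_add_two[OF u u_ne] 0 by simp
  have "(r @ [d]) @ [c, c] \<in> Dset n (t + 2)" using sub E1_mem[OF c] by blast
  moreover have "r @ [c, \<alpha>, d] \<in> Dset n (t + 2)" if "\<alpha> \<in> {1..n}" "\<alpha> \<noteq> d" for \<alpha>
    using sub E2_mem[OF cd that(2) c that(1)] by blast
  ultimately show ?thesis using dominated_append_pair[OF cd ab, of r 0] 0 by simp
next
  case (Suc m')
  then have "c \<in> set (r @ [d] @ replicate m c)" "d \<in> set (r @ [d] @ replicate m c)" by auto
  then have "r @ [d] @ replicate m c \<noteq> replicate t 1" using cd by (metis in_set_replicate)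
  then have sub: "E1 n (r @ [d] @ replicate m c) \<union> E3 n (r @ [d] @ replicate m c) \<subseteq> Dset n (t + 2)"
    using E_subset_Dset_add_two[OF u] by blast
  have "(r @ [d] @ replicate m c) @ [c, c] \<in> Dset n (t + 2)" using sub E1_mem[OF c] by blast
  moreover have "r @ [c] @ replicate m d @ [\<alpha>, d] \<in> Dset n (t + 2)" if "\<alpha> \<in> {1..n}" "\<alpha> \<noteq> d" for \<alpha>
    using sub E3_mem[OF cd _ that(2,1), of m r] Suc by auto
  ultimately show ?thesis using dominated_append_pair[OF cd ab, of r m] by simp
qed

lemma dominated_append_two_of_const_neighbour:
  assumes "even t" "t \<ge> 2" "c \<noteq> 1" "c \<in> {1..n}" "a \<in> {1..n}" "b \<in> {1..n}"
  shows "dominated (Dset n (t + 2)) (replicate (t - 1) 1 @ [c, a, b])"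
proof -
  let ?r = "replicate (t - 2) (1::nat)"
  have v: "?r @ [c] @ replicate 1 1 \<in> Dset n t" using Dset_even_mem[OF assms(1,2,4)] by simp
  have "c \<in> set (?r @ [c] @ replicate 1 1)" "c \<notin> set (replicate t (1::nat))"
    using assms(3) by simp_all
  then have ne: "?r @ [c] @ replicate 1 1 \<noteq> replicate t 1" by metis
  have one: "(1::nat) \<in> {1..n}" using assms(4) by simp
  have "dominated (Dset n (t + 2)) (?r @ [1] @ replicate 1 c @ [a, b])"
    using dominated_append_two_of_neighbour[OF v disjI1[OF ne] assms(3)[symmetric] one assms(5,6)] .
  moreover have "t - 1 = Suc (t - 2)" using assms(2) by simp
  then have "replicate (t - 1) (1::nat) = ?r @ [1]" by (simp add: replicate_append_same)
  ultimately show ?thesis by simp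
qed

lemma dominated_append_two:
  assumes "dominated (Dset n t) p" and "p \<in> sierp_vertices n t" and "a \<in> {1..n}" "b \<in> {1..n}"
  shows "dominated (Dset n (t + 2)) (p @ [a, b])"
  using assms(1) unfolding dominated_def[of "Dset n t"]
proof (elim disjE bexE)
  assume "p \<in> Dset n t"
  then show ?thesis using dominated_append_two_of_mem assms(3) by blast
next
  fix u assume u: "u \<in> Dset n t" and "sierp_adj u p"
  then obtain r d c m where dc: "d \<noteq> c"
    and u_eq: "u = r @ [d] @ replicate m c" and p_eq: "p = r @ [c] @ replicate m d"
    using sierp_adj_imp_swap by blast
  have cd: "c \<noteq> d" using dc by simp
  have c: "c \<in> {1..n}" using sierp_vertices_letter[OF assms(2)] p_eq by simp
  show ?thesis
  proof (cases "u \<noteq> replicate t 1 \<or> odd t")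
    case True
    from dominated_append_two_of_neighbour[OF u[unfolded u_eq] True[unfolded u_eq] cd c assms(3,4)]
    show ?thesis using p_eq by simp
  next
    case False
    then have "even t" and u1: "r @ [d] @ replicate m c = replicate t 1" using u_eq by auto
    have "m = 0" "d = 1" "r = replicate (t - 1) 1" using swap_eq_replicate[OF u1 cd] by auto
    have "t \<noteq> 1" using \<open>even t\<close> by auto
    then have "t \<ge> 2" using Dset_mem_imp_ge_1[OF u] by simp
    from dominated_append_two_of_const_neighbour[OF \<open>even t\<close> this _ c assms(3,4)]
    show ?thesis using cd p_eq \<open>m = 0\<close> \<open>d = 1\<close> \<open>r = replicate (t - 1) 1\<close> by simp
  qed
qed

lemma sierp_vertices_add_two_elim:
  assumes "x \<in> sierp_vertices n (t + 2)"
  obtains p a b where "x = p @ [a, b]" "p \<in> sierp_vertices n t" "a \<in> {1..n}" "b \<in> {1..n}"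
proof -
  have len: "length x = t + 2" and letters: "set x \<subseteq> {1..n}"
    using assms unfolding sierp_vertices_def by auto
  obtain y b where "x = y @ [b]" using len by (cases x rule: rev_cases) auto
  moreover obtain p a where "y = p @ [a]" using len \<open>x = y @ [b]\<close> by (cases y rule: rev_cases) auto
  ultimately show thesis using that len letters unfolding sierp_vertices_def by auto
qed

lemma Dset_dominates:
  assumes "1 \<le> t" and "x \<in> sierp_vertices n t"
  shows "dominated (Dset n t) x"
  using assms
proof (induction t arbitrary: x rule: nat_induct_add_two_from_one)
  case one
  then obtain a where "x = [] @ [a]" by (auto simp: sierp_vertices_def length_Suc_conv)
  then show ?case using dominated_snoc[of "[]" 1] by (simp add: Dset_1)
next
  case two
  then have "x \<in> sierp_vertices n (0 + 2)" by (simp add: numeral_2_eq_2)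
  then obtain a b where "x = [a] @ [b]" and "a \<in> {1..n}"
    by (rule sierp_vertices_add_two_elim) (auto simp: sierp_vertices_def)
  then show ?case using dominated_snoc[of "[a]" 1 "Dset n 2" b] by (auto simp: Dset_2)
next
  case (add_two t)
  from add_two.prems show ?case
  proof (cases rule: sierp_vertices_add_two_elim)
    case (1 p a b)
    then show ?thesis using dominated_append_two add_two.IH by blast
  qed
qed

theorem theorem2p6:
  fixes n t :: nat
  assumes "n \<ge> 2" and "t \<ge> 1"
  shows "sierp_dominating n t (Dset n t)"
  using Dset_subset_vertices[of n t] Dset_dominates[OF assms(2)] assms(1)
  unfolding sierp_dominating_def dominated_def by auto

end
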